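(* Let $\mathcal{G}=(\mathcal{N},\mathcal{E})$ be a finite rooted tree whose edges are directed from parent to child, and let each edge $e\in\mathcal{E}$ carry a strictly positive weight $w(e)>0$. Call a set of edges $\mathcal{E}'\subseteq\mathcal{E}$ a matching (feasible schedule) if no two distinct edges of $\mathcal{E}'$ share a common vertex, and call a matching a maximum weighted matching (MWM) of $\mathcal{G}$ if it maximizes $\sum_{e\in\mathcal{E}'} w(e)$ over all matchings of $\mathcal{G}$. Let $n_k$ be an arbitrary internal node of $\mathcal{G}$ (i.e., a node with at least one child), and let $\{n_j\}_k$ be the set of its children. Then every MWM of $\mathcal{G}$ contains an edge having as one of its endpoints either $n_k$ or some element of $\{n_j\}_k$.
   Context: The tree models an Integrated Access and Backhaul network in spanning-tree topology: nodes are the IAB-donor (root), IAB-nodes, and representative user nodes; each directed edge $e_{n_j\to n_k}$ goes from a parent node $n_j$ to its child $n_k$. The weight of an edge is the (positive) utility obtained when scheduling that link, and the utility of a set of scheduled links is the sum of their weights. *)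

theory Defs
  imports Complex_Main
begin

text \<open>A finite rooted tree on node set N with root r, given by a parent function
  par (meaningful on N - {r}); every node reaches the root by iterating par.\<close>
definition rooted_tree :: "'a set \<Rightarrow> 'a \<Rightarrow> ('a \<Rightarrow> 'a) \<Rightarrow> bool" where
  "rooted_tree N r par \<longleftrightarrow> finite N \<and> r \<in> N \<and>
     (\<forall>x \<in> N - {r}. par x \<in> N) \<and>
     (\<forall>x \<in> N. \<exists>n. (par ^^ n) x = r)"

definition tree_edges :: "'a set \<Rightarrow> 'a \<Rightarrow> ('a \<Rightarrow> 'a) \<Rightarrow> ('a \<times> 'a) set" where
  "tree_edges N r par = {(par x, x) | x. x \<in> N - {r}}"

definition children :: "'a set \<Rightarrow> 'a \<Rightarrow> ('a \<Rightarrow> 'a) \<Rightarrow> 'a \<Rightarrow> 'a set" where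
  "children N r par k = {j \<in> N - {r}. par j = k}"

definition endpoints :: "'a \<times> 'a \<Rightarrow> 'a set" where
  "endpoints e = {fst e, snd e}"

definition is_matching :: "('a \<times> 'a) set \<Rightarrow> ('a \<times> 'a) set \<Rightarrow> bool" where
  "is_matching E M \<longleftrightarrow> M \<subseteq> E \<and>
     (\<forall>e1 \<in> M. \<forall>e2 \<in> M. e1 \<noteq> e2 \<longrightarrow> endpoints e1 \<inter> endpoints e2 = {})"

definition is_MWM :: "('a \<times> 'a) set \<Rightarrow> ('a \<times> 'a \<Rightarrow> real) \<Rightarrow> ('a \<times> 'a) set \<Rightarrow> bool" where
  "is_MWM E w M \<longleftrightarrow> is_matching E M \<and>
     (\<forall>M'. is_matching E M' \<longrightarrow> sum w M' \<le> sum w M)"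

end

theory Submission
  imports Defs
begin

text \<open>With positive weights an MWM is a maximal matching: an edge disjoint from it could be added
  with a gain of its weight. Every edge from an internal node k to a child therefore meets the MWM,
  at k or at that child.\<close>

lemma finite_tree_edges:
  assumes "finite N"
  shows "finite (tree_edges N r par)"
proof -
  have "tree_edges N r par = (\<lambda>x. (par x, x)) ` (N - {r})"
    unfolding tree_edges_def by blast
  then show ?thesis using assms by simp
qed

lemma tree_edge_to_child:
  assumes "j \<in> children N r par k"
  shows "(k, j) \<in> tree_edges N r par"
  using assms unfolding children_def tree_edges_def by blast

lemma is_matching_insert:
  assumes "is_matching E M" and "e \<in> E"
    and "\<forall>e' \<in> M. endpoints e' \<inter> endpoints e = {}"
  shows "is_matching E (insert e M)"
  using assms unfolding is_matching_def by (auto simp: Int_commute)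

lemma is_MWM_meets_positive_edge:
  assumes "is_MWM E w M" and "finite E" and "e \<in> E" and "w e > 0"
  shows "\<exists>e' \<in> M. endpoints e' \<inter> endpoints e \<noteq> {}"
proof (rule ccontr)
  assume "\<not> ?thesis"
  then have disjoint: "\<forall>e' \<in> M. endpoints e' \<inter> endpoints e = {}" by blast
  have matching: "is_matching E M" and optimal: "\<And>M'. is_matching E M' \<Longrightarrow> sum w M' \<le> sum w M"
    using assms(1) unfolding is_MWM_def by auto
  have "finite M"
    using matching assms(2) unfolding is_matching_def by (blast intro: finite_subset)
  moreover have "e \<notin> M"
    using disjoint unfolding endpoints_def by blast
  ultimately have "sum w (insert e M) = w e + sum w M" by simp
  moreover have "sum w (insert e M) \<le> sum w M"
    using optimal is_matching_insert[OF matching assms(3) disjoint] by blast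
  ultimately show False using assms(4) by simp
qed

theorem lemma1:
  fixes N :: "'a set" and r :: 'a and par :: "'a \<Rightarrow> 'a"
    and w :: "'a \<times> 'a \<Rightarrow> real" and M :: "('a \<times> 'a) set" and k :: 'a
  assumes "rooted_tree N r par"
    and "\<forall>e \<in> tree_edges N r par. w e > 0"
    and "k \<in> N" and "children N r par k \<noteq> {}"
    and "is_MWM (tree_edges N r par) w M"
  shows "\<exists>e \<in> M. k \<in> endpoints e \<or> endpoints e \<inter> children N r par k \<noteq> {}"
proof -
  obtain j where j: "j \<in> children N r par k" using assms(4) by blast
  have edge: "(k, j) \<in> tree_edges N r par" using tree_edge_to_child[OF j] .
  have "finite N" using assms(1) by (simp add: rooted_tree_def)
  then obtain e where "e \<in> M" and "endpoints e \<inter> {k, j} \<noteq> {}"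
    using is_MWM_meets_positive_edge[OF assms(5) finite_tree_edges edge] assms(2) edge
    by (auto simp: endpoints_def)
  then show ?thesis using j by blast
qed

end
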